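(* Let $\Delta x>0$, $x_i\in\mathbb{R}$, $M\in\mathbb{N}_0$, and let $p_h(x;x_i,\Delta x)=\sum_{m=0}^{M}c_{h_m}\left(\frac{x-x_i}{\Delta x}\right)^m$ be a polynomial of degree $M$. Then $$p_f(x;x_i,\Delta x):=\frac{1}{\Delta x}\int_{x-\frac12\Delta x}^{x+\frac12\Delta x}p_h(\zeta;x_i,\Delta x)\,d\zeta$$ is a polynomial also of degree $M$, $p_f(x;x_i,\Delta x)=\sum_{m=0}^M c_{f_m}\left(\frac{x-x_i}{\Delta x}\right)^m$, with $$c_{f_m}=\sum_{k=0}^{\lfloor (M-m)/2\rfloor}\frac{c_{h_{m+2k}}}{2^{2k}(2k+1)}\binom{m+2k}{2k},\qquad\text{equivalently}\qquad m!\,c_{f_m}=\sum_{k=0}^{\lfloor (M-m)/2\rfloor}\frac{(m+2k)!}{2^{2k}(2k+1)!}c_{h_{m+2k}},$$ for all $m\in\{0,\dots,M\}$. Inversely, $$c_{h_m}=\frac{1}{m!}\sum_{k=0}^{\lfloor (M-m)/2\rfloor}\tau_{2k}\,c_{f_{m+2k}}\,(m+2k)!\qquad\forall m\in\{0,\dots,M\},$$ where $\tau_0=1$ and $\tau_{2k}=\sum_{s=0}^{k-1}\frac{-\tau_{2s}}{2^{2k-2s}(2k-2s+1)!}$ for $k>0$ (equivalently $\tau_n=g_\tau^{(n)}(0)/n!$ with $g_\tau(x)=\frac{x/2}{\sinh(x/2)}$). *)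

theory Defs
  imports "HOL-Analysis.Analysis"
begin

text \<open>tau2 k stands for the paper's tau_{2k}: tau_0 = 1 and for k > 0
  tau_{2k} = sum_{s=0}^{k-1} - tau_{2s} / (2^(2k-2s) (2k-2s+1)!).\<close>
function tau2 :: "nat \<Rightarrow> real" where
  "tau2 k = (if k = 0 then 1
     else (\<Sum>s\<in>{..<k}. (- tau2 s) / ((2::real) ^ (2 * k - 2 * s) * fact (2 * k - 2 * s + 1))))"
  by auto
termination by (relation "Wellfounded.measure id") auto

definition scaled_poly :: "(nat \<Rightarrow> real) \<Rightarrow> nat \<Rightarrow> real \<Rightarrow> real \<Rightarrow> real \<Rightarrow> real" where
  "scaled_poly c M xi dx x = (\<Sum>m\<le>M. c m * ((x - xi) / dx) ^ m)"

definition cell_avg :: "(real \<Rightarrow> real) \<Rightarrow> real \<Rightarrow> real \<Rightarrow> real" where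
  "cell_avg p dx x = (1 / dx) * integral {x - dx/2 .. x + dx/2} p"

end

theory Submission
  imports Defs
begin

text \<open>In the variable u = (x - x_i)/dx, averaging u^n over the cell [u - 1/2, u + 1/2] kills
  the odd part of the binomial expansion of the antiderivative and damps the term u^(n-2k) by
  the moment 1/(2^(2k) (2k+1)) of the centred unit cell; collecting terms by powers of u gives
  c_f. After scaling by factorials, c_h \<mapsto> c_f is a convolution in steps of two with the
  weights 1/(2^(2k) (2k+1)!), the Taylor coefficients of sinh(x/2)/(x/2), and tau2 is the
  recursively computed convolution inverse of these weights.\<close>

(* tau2.simps is a non-terminating rewrite rule (its right-hand side contains tau2). *)
declare tau2.simps [simp del]

definition cell_avg_weight :: "nat \<Rightarrow> real" where
  "cell_avg_weight k = 1 / (2 ^ (2*k) * fact (2*k + 1))"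

definition cell_avg_coeffs :: "(nat \<Rightarrow> real) \<Rightarrow> nat \<Rightarrow> nat \<Rightarrow> real" where
  "cell_avg_coeffs c M m = (\<Sum>k\<le>(M - m) div 2.
     c (m + 2*k) / ((2::real) ^ (2*k) * (2 * real k + 1)) * real ((m + 2*k) choose (2*k)))"

lemma sum_atMost_step2_reindex:
  "(\<Sum>m\<le>M. \<Sum>k\<le>(M - m) div 2. g m k) = (\<Sum>n\<le>(M::nat). \<Sum>k\<le>n div 2. g (n - 2*k) k)"
proof -
  have "(\<Sum>m\<le>M. \<Sum>k\<le>(M - m) div 2. g m k) = (\<Sum>(m,k)\<in>Sigma {..M} (\<lambda>m. {..(M - m) div 2}). g m k)"
    by (simp add: sum.Sigma)
  also have "\<dots> = (\<Sum>(n,k)\<in>Sigma {..M} (\<lambda>n. {..n div 2}). g (n - 2*k) k)"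
    by (rule sum.reindex_bij_witness[where j="\<lambda>(m,k). (m + 2*k, k)" and i="\<lambda>(n,k). (n - 2*k, k)"])
      auto
  finally show ?thesis
    by (simp add: sum.Sigma)
qed

lemma sum_atMost_Suc_odd:
  fixes f :: "nat \<Rightarrow> 'a::comm_monoid_add"
  assumes "\<And>k. f (2*k) = 0"
  shows "(\<Sum>j\<le>Suc n. f j) = (\<Sum>k\<le>n div 2. f (2*k + 1))"
proof -
  have "(\<Sum>k\<le>n div 2. f (2*k + 1)) = sum f ((\<lambda>k. 2*k + 1) ` {..n div 2})"
    by (subst sum.reindex) (auto simp: inj_on_def)
  also have "\<dots> = (\<Sum>j\<le>Suc n. f j)"
  proof (rule sum.mono_neutral_left)
    show "\<forall>i\<in>{..Suc n} - (\<lambda>k. 2*k + 1) ` {..n div 2}. f i = 0"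
    proof
      fix i assume i: "i \<in> {..Suc n} - (\<lambda>k. 2*k + 1) ` {..n div 2}"
      have "even i"
      proof (rule ccontr)
        assume "odd i"
        then obtain k where "i = 2*k + 1"
          by (metis oddE)
        with i show False
          by auto
      qed
      then show "f i = 0"
        using assms by (metis evenE)
    qed
  qed auto
  finally show ?thesis ..
qed

lemma power_central_difference:
  fixes u :: real
  shows "((u + 1/2) ^ Suc n - (u - 1/2) ^ Suc n) / Suc n
     = (\<Sum>k\<le>n div 2. u ^ (n - 2*k) * real (n choose (2*k)) / (2 ^ (2*k) * (2 * real k + 1)))"
proof -
  define f where "f j = real (Suc n choose j) * ((1/2) ^ j - (-1/2) ^ j) * u ^ (Suc n - j)" for j
  have "(u + 1/2) ^ Suc n - (u - 1/2) ^ Suc n = (\<Sum>j\<le>Suc n. f j)"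
    using binomial_ring[of "1/2::real" u "Suc n"] binomial_ring[of "-1/2::real" u "Suc n"]
    by (simp add: f_def add.commute sum_subtractf algebra_simps)
  also have "\<dots> = (\<Sum>k\<le>n div 2. f (2*k + 1))"
    by (rule sum_atMost_Suc_odd) (simp add: f_def)
  finally have "((u + 1/2) ^ Suc n - (u - 1/2) ^ Suc n) / Suc n = (\<Sum>k\<le>n div 2. f (2*k + 1) / Suc n)"
    by (simp add: sum_divide_distrib)
  also have "\<dots> = (\<Sum>k\<le>n div 2. u ^ (n - 2*k) * real (n choose (2*k)) / (2 ^ (2*k) * (2 * real k + 1)))"
  proof (rule sum.cong[OF refl])
    fix k
    have "real (Suc n choose Suc (2*k)) = real (Suc n) * real (n choose (2*k)) / (2 * real k + 1)"
      using Suc_times_binomial[of "2*k" n, THEN arg_cong[of _ _ real]]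
      by (simp add: field_simps del: binomial_Suc_Suc)
    then show "f (2*k + 1) / Suc n
        = u ^ (n - 2*k) * real (n choose (2*k)) / (2 ^ (2*k) * (2 * real k + 1))"
      by (simp add: f_def power_add power_one_over ac_simps del: of_nat_Suc binomial_Suc_Suc)
  qed
  finally show ?thesis .
qed

lemma has_integral_scaled_monomial_cell:
  fixes dx xi x :: real
  assumes "dx > 0"
  defines "u \<equiv> (x - xi) / dx"
  shows "((\<lambda>z. ((z - xi) / dx) ^ n) has_integral
           dx * (((u + 1/2) ^ Suc n - (u - 1/2) ^ Suc n) / Suc n)) {x - dx/2 .. x + dx/2}"
proof -
  define F where "F z = dx / Suc n * ((z - xi) / dx) ^ Suc n" for z
  have "(F has_real_derivative ((z - xi) / dx) ^ n) (at z)" for z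
  proof -
    have "((\<lambda>z. (z - xi) / dx) has_real_derivative 1 / dx) (at z)"
      using assms(1) by (auto intro!: derivative_eq_intros)
    from DERIV_cmult[OF DERIV_power[OF this, of "Suc n"], of "dx / Suc n"] show ?thesis
      unfolding F_def[abs_def] using assms(1) by (simp del: of_nat_Suc)
  qed
  then have "((\<lambda>z. ((z - xi) / dx) ^ n) has_integral (F (x + dx/2) - F (x - dx/2))) {x - dx/2 .. x + dx/2}"
    using assms(1)
    by (intro fundamental_theorem_of_calculus)
      (auto simp: has_real_derivative_iff_has_vector_derivative[symmetric] intro: has_field_derivative_at_within)
  moreover have "(x + dx/2 - xi) / dx = u + 1/2" "(x - dx/2 - xi) / dx = u - 1/2"
    using assms(1) by (simp_all add: u_def field_simps)
  then have "F (x + dx/2) - F (x - dx/2) = dx * (((u + 1/2) ^ Suc n - (u - 1/2) ^ Suc n) / Suc n)"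
    by (simp add: F_def right_diff_distrib diff_divide_distrib del: of_nat_Suc)
  ultimately show ?thesis
    by simp
qed

lemma cell_avg_scaled_poly:
  assumes "dx > 0"
  shows "cell_avg (scaled_poly c M xi dx) dx x = scaled_poly (cell_avg_coeffs c M) M xi dx x"
proof -
  define u where "u = (x - xi) / dx"
  define g where "g m k = c (m + 2*k) / ((2::real) ^ (2*k) * (2 * real k + 1))
                            * real ((m + 2*k) choose (2*k)) * u ^ m" for m k
  have "(scaled_poly c M xi dx has_integral
          (\<Sum>n\<le>M. c n * (dx * (((u + 1/2) ^ Suc n - (u - 1/2) ^ Suc n) / Suc n))))
        {x - dx/2 .. x + dx/2}"
    unfolding scaled_poly_def u_def
    using assms by (intro has_integral_sum has_integral_mult_right has_integral_scaled_monomial_cell)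
      auto
  then have "cell_avg (scaled_poly c M xi dx) dx x
      = (\<Sum>n\<le>M. c n * (((u + 1/2) ^ Suc n - (u - 1/2) ^ Suc n) / Suc n))"
    using assms by (simp add: cell_avg_def integral_unique sum_distrib_left)
  also have "\<dots> = (\<Sum>n\<le>M. \<Sum>k\<le>n div 2. g (n - 2*k) k)"
    unfolding power_central_difference sum_distrib_left
    by (intro sum.cong refl) (auto simp: g_def)
  also have "\<dots> = (\<Sum>m\<le>M. \<Sum>k\<le>(M - m) div 2. g m k)"
    by (rule sum_atMost_step2_reindex[symmetric])
  also have "\<dots> = scaled_poly (cell_avg_coeffs c M) M xi dx x"
    by (simp add: scaled_poly_def cell_avg_coeffs_def g_def u_def sum_distrib_right)
  finally show ?thesis .
qed

lemma fact_mult_cell_avg_term: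
  "fact m * (c / ((2::real) ^ (2*k) * (2 * real k + 1)) * real ((m + 2*k) choose (2*k)))
     = fact (m + 2*k) / (2 ^ (2*k) * fact (2*k + 1)) * c"
proof -
  have "fact (m + 2*k) = fact (2*k) * fact m * (real ((m + 2*k) choose (2*k)) :: real)"
    using binomial_fact_lemma[of "2*k" "m + 2*k", THEN arg_cong[of _ _ real]] by simp
  moreover have "fact (2*k + 1) = (2 * real k + 1) * (fact (2*k) :: real)"
    by simp
  ultimately show ?thesis
    by (simp only:) (simp add: divide_simps ac_simps)
qed

lemma tau2_convolution_cell_avg_weight:
  "(\<Sum>k\<le>n. tau2 k * cell_avg_weight (n - k)) = (if n = 0 then 1 else 0)"
proof (cases "n = 0")
  case False
  have "tau2 n = - (\<Sum>k<n. tau2 k * cell_avg_weight (n - k))"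
    using False
    by (subst tau2.simps)
      (auto simp: cell_avg_weight_def diff_mult_distrib2 sum_negf[symmetric] intro!: sum.cong)
  then show ?thesis
    using False by (simp add: lessThan_Suc_atMost[symmetric] cell_avg_weight_def)
qed (simp add: tau2.simps cell_avg_weight_def)

lemma tau2_inversion:
  fixes a b :: "nat \<Rightarrow> real"
  assumes b: "\<And>n. b n = (\<Sum>j\<le>(M - n) div 2. cell_avg_weight j * a (n + 2*j))"
  shows "(\<Sum>k\<le>(M - m) div 2. tau2 k * b (m + 2*k)) = a m"
proof -
  define D where "D = (M - m) div 2"
  have "(\<Sum>k\<le>D. tau2 k * b (m + 2*k))
      = (\<Sum>k\<le>D. \<Sum>j\<le>D - k. tau2 k * cell_avg_weight j * a (m + 2*k + 2*j))"
  proof (rule sum.cong[OF refl])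
    fix k assume "k \<in> {..D}"
    then have "(M - (m + 2*k)) div 2 = D - k"
      by (auto simp: D_def)
    then show "tau2 k * b (m + 2*k) = (\<Sum>j\<le>D - k. tau2 k * cell_avg_weight j * a (m + 2*k + 2*j))"
      by (simp add: b sum_distrib_left mult.assoc)
  qed
  also have "\<dots> = (\<Sum>(k,j)\<in>{(k,j). k + j \<le> D}. tau2 k * cell_avg_weight j * a (m + 2*k + 2*j))"
    by (simp add: sum.Sigma) (rule sum.cong; auto)
  also have "\<dots> = (\<Sum>n\<le>D. \<Sum>k\<le>n. tau2 k * cell_avg_weight (n - k) * a (m + 2*k + 2*(n - k)))"
    by (rule sum.triangle_reindex_eq)
  also have "\<dots> = (\<Sum>n\<le>D. a (m + 2*n) * (\<Sum>k\<le>n. tau2 k * cell_avg_weight (n - k)))"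
    unfolding sum_distrib_left by (intro sum.cong refl) (auto simp: algebra_simps)
  also have "\<dots> = a m"
    by (simp add: tau2_convolution_cell_avg_weight if_distrib[of "(*) _"] cong: if_cong)
  finally show ?thesis
    by (simp add: D_def)
qed

theorem lemma3:
  fixes dx xi :: real and M :: nat and ch cf :: "nat \<Rightarrow> real"
  assumes "dx > 0"
    and "ch M \<noteq> 0"
    and "\<And>m. cf m = (\<Sum>k\<le>(M - m) div 2.
            ch (m + 2*k) / ((2::real) ^ (2*k) * (2 * real k + 1)) * real ((m + 2*k) choose (2*k)))"
  shows "(\<forall>x. cell_avg (scaled_poly ch M xi dx) dx x = scaled_poly cf M xi dx x)
    \<and> cf M \<noteq> 0
    \<and> (\<forall>m\<le>M. fact m * cf m = (\<Sum>k\<le>(M - m) div 2.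
            fact (m + 2*k) / (2 ^ (2*k) * fact (2*k + 1)) * ch (m + 2*k)))
    \<and> (\<forall>m\<le>M. ch m = 1 / fact m * (\<Sum>k\<le>(M - m) div 2.
            tau2 k * cf (m + 2*k) * fact (m + 2*k)))"
proof -
  have "cf = cell_avg_coeffs ch M"
    using assms(3) by (simp add: cell_avg_coeffs_def fun_eq_iff)
  then have avg: "cell_avg (scaled_poly ch M xi dx) dx x = scaled_poly cf M xi dx x" for x
    using cell_avg_scaled_poly[OF assms(1)] by simp
  have fact_cf: "fact m * cf m = (\<Sum>k\<le>(M - m) div 2.
      fact (m + 2*k) / (2 ^ (2*k) * fact (2*k + 1)) * ch (m + 2*k))" for m
    unfolding assms(3) sum_distrib_left fact_mult_cell_avg_term ..
  have "(\<Sum>k\<le>(M - m) div 2. tau2 k * (fact (m + 2*k) * cf (m + 2*k))) = fact m * ch m" for m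
    by (rule tau2_inversion) (simp add: fact_cf cell_avg_weight_def mult.commute)
  then have ch: "ch m = 1 / fact m * (\<Sum>k\<le>(M - m) div 2. tau2 k * cf (m + 2*k) * fact (m + 2*k))" for m
    by (simp add: ac_simps)
  have "cf M \<noteq> 0"
    using assms(2) assms(3)[of M] by simp
  with avg fact_cf ch show ?thesis
    by blast
qed

end
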